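(* Let $T$ be a complete first-order theory with a formula $\varphi_*(x,y)$ (written $xRy$) such that $T\models\exists y\forall x\,\neg(xRy)$ and $T\models\forall x\forall y\exists y_1\forall x_1\,[x_1Ry_1\leftrightarrow(x_1Ry\vee x_1=x)]$. Then for every singular cardinal $\kappa$, every $\kappa$-saturated model of $T$ is $\kappa^+$-saturated; hence $T$ has no exactly $\kappa$-saturated model for singular $\kappa$. Moreover, such theories exist which are independent (have the independence property): e.g. for any infinite structure $M$ and a new binary relation symbol $R$, expanding $M$ by $R=\{(a,b):a\in u_b\}$ where $\langle u_b:b\in M\rangle$ lists all finite subsets of $M$ yields such a theory $\mathrm{Th}(M,R)$.
   Context: A model is exactly $\kappa$-saturated if it is $\kappa$-saturated but not $\kappa^+$-saturated. $T$ is independent if some formula $\varphi(\bar x,\bar y)$ has the independence property in models of $T$. *)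

theory Defs
  imports Main
begin

datatype 'f trm = Var nat | Fn 'f "'f trm list"

datatype ('f, 'r) fm =
    Eq "'f trm" "'f trm"
  | Rel 'r "'f trm list"
  | Neg "('f, 'r) fm"
  | Conj "('f, 'r) fm" "('f, 'r) fm"
  | Ex nat "('f, 'r) fm"

text \<open>A language is given by the arities of its function symbols (constants have arity 0)
  and of its relation symbols.\<close>
type_synonym ('f, 'r) lang = "('f \<Rightarrow> nat) \<times> ('r \<Rightarrow> nat)"

fun twf :: "('f \<Rightarrow> nat) \<Rightarrow> 'f trm \<Rightarrow> bool" where
  "twf fa (Var n) = True"
| "twf fa (Fn f ts) = (length ts = fa f \<and> (\<forall>t\<in>set ts. twf fa t))"

fun tvars :: "'f trm \<Rightarrow> nat set" where
  "tvars (Var n) = {n}"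
| "tvars (Fn f ts) = (\<Union>t\<in>set ts. tvars t)"

fun fwf :: "('f, 'r) lang \<Rightarrow> ('f, 'r) fm \<Rightarrow> bool" where
  "fwf L (Eq s t) = (twf (fst L) s \<and> twf (fst L) t)"
| "fwf L (Rel r ts) = (length ts = snd L r \<and> (\<forall>t\<in>set ts. twf (fst L) t))"
| "fwf L (Neg \<phi>) = fwf L \<phi>"
| "fwf L (Conj \<phi> \<psi>) = (fwf L \<phi> \<and> fwf L \<psi>)"
| "fwf L (Ex n \<phi>) = fwf L \<phi>"

fun FV :: "('f, 'r) fm \<Rightarrow> nat set" where
  "FV (Eq s t) = tvars s \<union> tvars t"
| "FV (Rel r ts) = (\<Union>t\<in>set ts. tvars t)"
| "FV (Neg \<phi>) = FV \<phi>"
| "FV (Conj \<phi> \<psi>) = FV \<phi> \<union> FV \<psi>"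
| "FV (Ex n \<phi>) = FV \<phi> - {n}"

definition sentence :: "('f, 'r) lang \<Rightarrow> ('f, 'r) fm \<Rightarrow> bool" where
  "sentence L \<sigma> \<longleftrightarrow> fwf L \<sigma> \<and> FV \<sigma> = {}"

record ('a, 'f, 'r) struct =
  dom :: "'a set"
  fn  :: "'f \<Rightarrow> 'a list \<Rightarrow> 'a"
  rl  :: "'r \<Rightarrow> 'a list \<Rightarrow> bool"

definition is_struct :: "('f, 'r) lang \<Rightarrow> ('a, 'f, 'r) struct \<Rightarrow> bool" where
  "is_struct L M \<longleftrightarrow> dom M \<noteq> {} \<and>
     (\<forall>f xs. length xs = fst L f \<and> set xs \<subseteq> dom M \<longrightarrow> fn M f xs \<in> dom M)"

fun teval :: "('a, 'f, 'r) struct \<Rightarrow> (nat \<Rightarrow> 'a) \<Rightarrow> 'f trm \<Rightarrow> 'a" where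
  "teval M e (Var n) = e n"
| "teval M e (Fn f ts) = fn M f (map (teval M e) ts)"

fun eval :: "('a, 'f, 'r) struct \<Rightarrow> (nat \<Rightarrow> 'a) \<Rightarrow> ('f, 'r) fm \<Rightarrow> bool" where
  "eval M e (Eq s t) = (teval M e s = teval M e t)"
| "eval M e (Rel r ts) = rl M r (map (teval M e) ts)"
| "eval M e (Neg \<phi>) = (\<not> eval M e \<phi>)"
| "eval M e (Conj \<phi> \<psi>) = (eval M e \<phi> \<and> eval M e \<psi>)"
| "eval M e (Ex n \<phi>) = (\<exists>a\<in>dom M. eval M (e(n := a)) \<phi>)"

text \<open>Truth of a sentence (the assignment is irrelevant for sentences).\<close>
definition models :: "('a, 'f, 'r) struct \<Rightarrow> ('f, 'r) fm \<Rightarrow> bool" where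
  "models M \<sigma> \<longleftrightarrow> (\<forall>e. eval M e \<sigma>)"

definition is_model :: "('f, 'r) lang \<Rightarrow> ('a, 'f, 'r) struct \<Rightarrow> ('f, 'r) fm set \<Rightarrow> bool" where
  "is_model L M T \<longleftrightarrow> is_struct L M \<and> (\<forall>\<sigma>\<in>T. models M \<sigma>)"

text \<open>Complete theory: a set of sentences, satisfiable (in a structure with carrier type 'a), containing, for every sentence,
  either it or its negation (i.e. a maximal consistent theory).\<close>
definition complete_theory :: "'a itself \<Rightarrow> ('f, 'r) lang \<Rightarrow> ('f, 'r) fm set \<Rightarrow> bool" where
  "complete_theory (_ :: 'a itself) L T \<longleftrightarrow> (\<forall>\<sigma>\<in>T. sentence L \<sigma>) \<and>
     (\<exists>M :: ('a, 'f, 'r) struct. is_model L M T) \<and>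
     (\<forall>\<sigma>. sentence L \<sigma> \<longrightarrow> \<sigma> \<in> T \<or> Neg \<sigma> \<in> T)"

definition Th :: "('f, 'r) lang \<Rightarrow> ('a, 'f, 'r) struct \<Rightarrow> ('f, 'r) fm set" where
  "Th L M = {\<sigma>. sentence L \<sigma> \<and> models M \<sigma>}"

text \<open>A formula over A in the free variable 0: a pair of a formula and an assignment
  sending all other free variables into A.\<close>
definition over :: "('f, 'r) lang \<Rightarrow> 'a set \<Rightarrow> (('f, 'r) fm \<times> (nat \<Rightarrow> 'a)) set" where
  "over L A = {(\<phi>, e). fwf L \<phi> \<and> e ` (FV \<phi> - {0}) \<subseteq> A}"

definition realizes :: "('a, 'f, 'r) struct \<Rightarrow> 'a \<Rightarrow> (('f, 'r) fm \<times> (nat \<Rightarrow> 'a)) set \<Rightarrow> bool" where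
  "realizes M b p \<longleftrightarrow> b \<in> dom M \<and> (\<forall>(\<phi>, e)\<in>p. eval M (e(0 := b)) \<phi>)"

definition is_type_over :: "('f, 'r) lang \<Rightarrow> ('a, 'f, 'r) struct \<Rightarrow> 'a set
     \<Rightarrow> (('f, 'r) fm \<times> (nat \<Rightarrow> 'a)) set \<Rightarrow> bool" where
  "is_type_over L M A p \<longleftrightarrow> p \<subseteq> over L A \<and>
     (\<forall>q. finite q \<and> q \<subseteq> p \<longrightarrow> (\<exists>b. realizes M b q))"

text \<open>\<kappa>-saturation; the cardinal \<kappa> is a cardinal-order relation on some type.\<close>
definition saturated :: "('f, 'r) lang \<Rightarrow> ('a, 'f, 'r) struct \<Rightarrow> 'k rel \<Rightarrow> bool" where
  "saturated L M \<kappa> \<longleftrightarrow> (\<forall>A. A \<subseteq> dom M \<and> (card_of A, \<kappa>) \<in> ordLess \<longrightarrow>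
     (\<forall>p. is_type_over L M A p \<longrightarrow> (\<exists>b. realizes M b p)))"

definition singular_cardinal :: "'k rel \<Rightarrow> bool" where
  "singular_cardinal \<kappa> \<longleftrightarrow> Card_order \<kappa> \<and> \<not> finite (Field \<kappa>) \<and> \<not> regularCard \<kappa>"

text \<open>Shelah's definition: \<phi>(x1..xk; y1..ym) (x-variables xs, y-variables ys, distinct,
  containing all free variables) has the independence property in M if for every n there are
  tuples a0..an-1 such that for every w \<subseteq> n there is b with \<phi>(al, b) iff l \<in> w.\<close>
definition has_IP :: "('f, 'r) lang \<Rightarrow> ('a, 'f, 'r) struct \<Rightarrow> ('f, 'r) fm
     \<Rightarrow> nat list \<Rightarrow> nat list \<Rightarrow> bool" where
  "has_IP L M \<phi> xs ys \<longleftrightarrow> fwf L \<phi> \<and> distinct (xs @ ys) \<and> FV \<phi> \<subseteq> set (xs @ ys) \<and>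
     (\<forall>n. \<exists>a :: nat \<Rightarrow> nat \<Rightarrow> 'a. (\<forall>l<n. \<forall>j. a l j \<in> dom M) \<and>
        (\<forall>w \<subseteq> {..<n}. \<exists>b :: nat \<Rightarrow> 'a. (\<forall>j. b j \<in> dom M) \<and>
           (\<forall>l<n. eval M (\<lambda>v. if v \<in> set xs then a l v else b v) \<phi> \<longleftrightarrow> l \<in> w)))"

definition independent :: "('f, 'r) lang \<Rightarrow> ('a, 'f, 'r) struct \<Rightarrow> ('f, 'r) fm set \<Rightarrow> bool" where
  "independent L M T \<longleftrightarrow> is_model L M T \<and> (\<exists>\<phi> xs ys. has_IP L M \<phi> xs ys)"

section \<open>The two axioms on \<phi>*(x,y) = xRy (x = variable 0, y = variable 1)\<close>

definition asg :: "'a \<Rightarrow> 'a \<Rightarrow> nat \<Rightarrow> 'a" where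
  "asg x y = (\<lambda>v. if v = 0 then x else y)"

definition ax_empty :: "('a, 'f, 'r) struct \<Rightarrow> ('f, 'r) fm \<Rightarrow> bool" where
  "ax_empty N \<phi> \<longleftrightarrow> (\<exists>y\<in>dom N. \<forall>x\<in>dom N. \<not> eval N (asg x y) \<phi>)"

definition ax_add :: "('a, 'f, 'r) struct \<Rightarrow> ('f, 'r) fm \<Rightarrow> bool" where
  "ax_add N \<phi> \<longleftrightarrow> (\<forall>x\<in>dom N. \<forall>y\<in>dom N. \<exists>y1\<in>dom N. \<forall>x1\<in>dom N.
      eval N (asg x1 y1) \<phi> \<longleftrightarrow> (eval N (asg x1 y) \<phi> \<or> x1 = x))"

definition expand_lang :: "('f, 'r) lang \<Rightarrow> ('f, 'r option) lang" where
  "expand_lang L = (fst L, (\<lambda>r. case r of None \<Rightarrow> 2 | Some r' \<Rightarrow> snd L r'))"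

definition expand :: "('a, 'f, 'r) struct \<Rightarrow> ('a \<Rightarrow> 'a set) \<Rightarrow> ('a, 'f, 'r option) struct" where
  "expand M u = \<lparr>dom = dom M, fn = fn M,
     rl = (\<lambda>r xs. case r of
              None \<Rightarrow> (case xs of [a, b] \<Rightarrow> a \<in> u b | _ \<Rightarrow> False)
            | Some r' \<Rightarrow> rl M r' xs)\<rparr>"

end

theory Submission
  imports Defs
begin

(* Read phi*(x, y) as "x belongs to the set coded by y"; the two axioms say exactly that every
   finite subset of a model is coded by an element.

   Let kappa be singular, M kappa-saturated and p a type over A with |A| <= kappa. Since kappa is
   singular, A is the union of a chain of fewer than kappa sets B, each of size < kappa; let b_B
   realize the restriction of p to B. For each B, saturation gives a code y_B that contains every
   b_C with B <= C and all of whose members realize p restricted to B: the type expressing this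
   is finitely satisfied by codes of finite sets of b_C's. The type {x R y_B} has fewer than kappa
   parameters and is finitely satisfied by a single b_D, so it is realized, and a realization
   realizes every restriction of p, hence p itself.

   In the expansion (M, R) every finite set is coded, which gives both axioms and, M being
   infinite, the independence property of x R y. *)

unbundle cardinal_syntax

section \<open>Formulas\<close>

lemma teval_cong: "(\<forall>v\<in>tvars t. e v = e' v) \<Longrightarrow> teval M e t = teval M e' t"
proof (induction t)
  case (Fn f ts)
  then have "map (teval M e) ts = map (teval M e') ts" by (intro map_cong) auto
  then show ?case by (metis teval.simps(2))
qed simp

lemma eval_cong: "(\<forall>v\<in>FV \<phi>. e v = e' v) \<Longrightarrow> eval M e \<phi> = eval M e' \<phi>"
proof (induction \<phi> arbitrary: e e')
  case (Eq s t)
  then show ?case using teval_cong[of s e e' M] teval_cong[of t e e' M] by auto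
next
  case (Rel r ts)
  have "map (teval M e) ts = map (teval M e') ts"
    using Rel by (intro map_cong) (auto intro!: teval_cong)
  then show ?case by (metis eval.simps(2))
next
  case (Ex n \<phi>)
  have "\<And>a. eval M (e(n := a)) \<phi> = eval M (e'(n := a)) \<phi>" using Ex.IH Ex.prems by auto
  then show ?case by simp
next
  case (Conj a b)
  then show ?case by (metis UnCI eval.simps(4) FV.simps(4))
qed auto

lemma finite_FV: "finite (FV \<phi>)"
proof -
  have "finite (tvars t)" for t :: "'f trm" by (induction t) auto
  then show ?thesis by (induction \<phi>) auto
qed

lemma sentence_eval_indep: "sentence L \<sigma> \<Longrightarrow> eval M e \<sigma> = eval M e' \<sigma>"
  unfolding sentence_def by (intro eval_cong) auto

lemma asg_eq_fun_upd: "asg x y = (\<lambda>_. y)(0 := x)"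
  by (simp add: asg_def fun_eq_iff)

definition fAll :: "nat \<Rightarrow> ('f, 'r) fm \<Rightarrow> ('f, 'r) fm" where
  "fAll v \<phi> = Neg (Ex v (Neg \<phi>))"

definition fImp :: "('f, 'r) fm \<Rightarrow> ('f, 'r) fm \<Rightarrow> ('f, 'r) fm" where
  "fImp \<phi> \<psi> = Neg (Conj \<phi> (Neg \<psi>))"

definition fOr :: "('f, 'r) fm \<Rightarrow> ('f, 'r) fm \<Rightarrow> ('f, 'r) fm" where
  "fOr \<phi> \<psi> = fImp (Neg \<phi>) \<psi>"

definition fIff :: "('f, 'r) fm \<Rightarrow> ('f, 'r) fm \<Rightarrow> ('f, 'r) fm" where
  "fIff \<phi> \<psi> = Conj (fImp \<phi> \<psi>) (fImp \<psi> \<phi>)"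

text \<open>There is no substitution on formulas; variables are renamed by binding w to the value of v.\<close>
definition let_var :: "nat \<Rightarrow> nat \<Rightarrow> ('f, 'r) fm \<Rightarrow> ('f, 'r) fm" where
  "let_var w v \<phi> = Ex w (Conj (Eq (Var w) (Var v)) \<phi>)"

lemma eval_connectives [simp]:
  "eval M e (fAll v \<phi>) \<longleftrightarrow> (\<forall>a\<in>dom M. eval M (e(v := a)) \<phi>)"
  "eval M e (fImp \<phi> \<psi>) \<longleftrightarrow> (eval M e \<phi> \<longrightarrow> eval M e \<psi>)"
  "eval M e (fOr \<phi> \<psi>) \<longleftrightarrow> eval M e \<phi> \<or> eval M e \<psi>"
  "eval M e (fIff \<phi> \<psi>) \<longleftrightarrow> (eval M e \<phi> \<longleftrightarrow> eval M e \<psi>)"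
  by (auto simp: fAll_def fImp_def fOr_def fIff_def)

lemma eval_let_var:
  "w \<noteq> v \<Longrightarrow> e v \<in> dom M \<Longrightarrow> eval M e (let_var w v \<phi>) \<longleftrightarrow> eval M (e(w := e v)) \<phi>"
  by (auto simp: let_var_def)

lemma FV_connectives [simp]:
  "FV (fAll v \<phi>) = FV \<phi> - {v}"
  "FV (fImp \<phi> \<psi>) = FV \<phi> \<union> FV \<psi>"
  "FV (fOr \<phi> \<psi>) = FV \<phi> \<union> FV \<psi>"
  "FV (fIff \<phi> \<psi>) = FV \<phi> \<union> FV \<psi>"
  "FV (let_var w v \<phi>) = insert v (FV \<phi>) - {w}"
  by (auto simp: fAll_def fImp_def fOr_def fIff_def let_var_def)

lemma fwf_connectives [simp]:
  "fwf L (fAll v \<phi>) = fwf L \<phi>"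
  "fwf L (fImp \<phi> \<psi>) = (fwf L \<phi> \<and> fwf L \<psi>)"
  "fwf L (fOr \<phi> \<psi>) = (fwf L \<phi> \<and> fwf L \<psi>)"
  "fwf L (fIff \<phi> \<psi>) = (fwf L \<phi> \<and> fwf L \<psi>)"
  "fwf L (let_var w v \<phi>) = fwf L \<phi>"
  by (auto simp: fAll_def fImp_def fOr_def fIff_def let_var_def)

definition fresh_var :: "('f, 'r) fm \<Rightarrow> nat" where
  "fresh_var \<phi> = Suc (Max (insert 1 (FV \<phi>)))"

lemma fresh_var_gt: "v \<in> insert 1 (FV \<phi>) \<Longrightarrow> v < fresh_var \<phi>"
proof -
  assume "v \<in> insert 1 (FV \<phi>)"
  then have "v \<le> Max (insert 1 (FV \<phi>))" using finite_FV by (intro Max_ge) auto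
  then show ?thesis unfolding fresh_var_def by simp
qed

section \<open>Saturation\<close>

lemma saturatedD:
  "saturated L M \<kappa> \<Longrightarrow> A \<subseteq> dom M \<Longrightarrow> |A| <o \<kappa> \<Longrightarrow> is_type_over L M A p \<Longrightarrow>
    \<exists>b. realizes M b p"
  unfolding saturated_def by blast

lemma over_mono: "A \<subseteq> B \<Longrightarrow> over L A \<subseteq> over L B"
  unfolding over_def by auto

lemma realizes_subset: "realizes M x p \<Longrightarrow> q \<subseteq> p \<Longrightarrow> realizes M x q"
  unfolding realizes_def by blast

lemma is_type_over_restrict: "is_type_over L M A p \<Longrightarrow> is_type_over L M B (p \<inter> over L B)"
  unfolding is_type_over_def by blast

lemma saturated_common_solution:
  assumes sat: "saturated L M \<kappa>" and "fwf L \<psi>" and Y: "Y \<subseteq> dom M" "|Y| <o \<kappa>"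
    and fin: "\<And>F. finite F \<Longrightarrow> F \<subseteq> Y \<Longrightarrow> \<exists>x\<in>dom M. \<forall>y\<in>F. eval M (asg x y) \<psi>"
  shows "\<exists>x\<in>dom M. \<forall>y\<in>Y. eval M (asg x y) \<psi>"
proof -
  define r where "r = (\<lambda>y. (\<psi>, \<lambda>_::nat. y)) ` Y"
  have "is_type_over L M Y r"
    unfolding is_type_over_def
  proof safe
    show "z \<in> over L Y" if "z \<in> r" for z
      using that \<open>fwf L \<psi>\<close> unfolding r_def over_def by auto
  next
    fix q assume "finite q" "q \<subseteq> r"
    then obtain F where "F \<subseteq> Y" "finite F" "q = (\<lambda>y. (\<psi>, \<lambda>_::nat. y)) ` F"
      unfolding r_def by (metis finite_subset_image)
    then show "\<exists>b. realizes M b q"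
      using fin by (fastforce simp: realizes_def asg_eq_fun_upd)
  qed
  then obtain x where "realizes M x r"
    using saturatedD[OF sat Y] by blast
  then show ?thesis
    unfolding realizes_def r_def by (auto simp: asg_eq_fun_upd)
qed

lemma chain_subset_finite_bound:
  assumes "chain\<^sub>\<subseteq> \<A>" "\<A> \<noteq> {}" "finite \<C>" "\<C> \<subseteq> \<A>"
  shows "\<exists>D\<in>\<A>. \<forall>C\<in>\<C>. C \<subseteq> D"
proof (cases "\<C> = {}")
  case False
  have "subset.chain UNIV \<C>"
    using assms(1,4) unfolding chain_subset_def subset.chain_def by blast
  then have "\<Union>\<C> \<in> \<C>"
    using Union_in_chain assms(3) False by blast
  then show ?thesis
    using assms(4) by blast
qed (use assms(2) in blast)

lemma realizes_chain_Union:
  assumes "chain\<^sub>\<subseteq> \<A>" "\<A> \<noteq> {}" "p \<subseteq> over L (\<Union>\<A>)"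
    and realizes: "\<And>B. B \<in> \<A> \<Longrightarrow> realizes M x (p \<inter> over L B)"
  shows "realizes M x p"
  unfolding realizes_def
proof (intro conjI ballI)
  show "x \<in> dom M"
    using realizes assms(2) unfolding realizes_def by blast
  fix z assume "z \<in> p"
  then obtain \<phi> e where z: "z = (\<phi>, e)" "fwf L \<phi>" "e ` (FV \<phi> - {0}) \<subseteq> \<Union>\<A>"
    using assms(3) unfolding over_def by blast
  have "finite (e ` (FV \<phi> - {0}))"
    using finite_FV by blast
  moreover have "subset.chain UNIV \<A>"
    using assms(1) unfolding chain_subset_alt_def .
  ultimately obtain B where "B \<in> \<A>" "e ` (FV \<phi> - {0}) \<subseteq> B"
    using finite_subset_Union_chain[OF _ z(3) assms(2)] by blast
  then have "z \<in> p \<inter> over L B"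
    using \<open>z \<in> p\<close> z unfolding over_def by blast
  then show "case z of (\<phi>, e) \<Rightarrow> eval M (e(0 := x)) \<phi>"
    using realizes[OF \<open>B \<in> \<A>\<close>] unfolding realizes_def by blast
qed

lemma underS_subset_total:
  assumes "Card_order \<kappa>" "k \<in> Field \<kappa>" "k' \<in> Field \<kappa>"
  shows "underS \<kappa> k \<subseteq> underS \<kappa> k' \<or> underS \<kappa> k' \<subseteq> underS \<kappa> k"
proof -
  have LO: "Linear_order \<kappa>"
    using card_order_on_well_order_on[OF assms(1)] unfolding well_order_on_def by blast
  then show ?thesis
    using wo_rel.TOTALS[OF Card_order_wo_rel[OF assms(1)]] assms(2,3)
      underS_incl_iff[OF LO assms(2,3)] underS_incl_iff[OF LO assms(3,2)] by blast
qed

lemma singular_cardinal_chain_cover: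
  fixes \<kappa> :: "'k rel" and A :: "'a set"
  assumes sing: "singular_cardinal \<kappa>" and A: "|A| \<le>o \<kappa>"
  obtains \<A> where "\<Union>\<A> = A" "chain\<^sub>\<subseteq> \<A>" "\<A> \<noteq> {}" "|\<A>| <o \<kappa>"
    "\<And>B. B \<in> \<A> \<Longrightarrow> |B| <o \<kappa>"
proof -
  have \<kappa>: "Card_order \<kappa>" "infinite (Field \<kappa>)" "\<not> regularCard \<kappa>"
    using sing unfolding singular_cardinal_def by auto
  have "|A| \<le>o |Field \<kappa>|"
    using ordLeq_ordIso_trans[OF A ordIso_symmetric[OF card_of_Field_ordIso[OF \<kappa>(1)]]] .
  then obtain f where f: "inj_on f A" "f ` A \<subseteq> Field \<kappa>"
    using card_of_ordLeq[of A "Field \<kappa>"] by blast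
  obtain K where K: "K \<subseteq> Field \<kappa>" "cofinal K \<kappa>" "\<not> |K| =o \<kappa>"
    using \<kappa>(3) unfolding regularCard_def by blast
  have "|K| \<le>o \<kappa>"
    using ordLeq_ordIso_trans[OF card_of_mono1[OF K(1)] card_of_Field_ordIso[OF \<kappa>(1)]] .
  with K(3) have K_small: "|K| <o \<kappa>"
    using ordLeq_iff_ordLess_or_ordIso by blast
  define C where "C k = {a \<in> A. f a \<in> underS \<kappa> k}" for k
  show ?thesis
  proof
    show "\<Union>(C ` K) = A"
      using f K(2) by (fastforce simp: C_def cofinal_def underS_def)
    show "chain\<^sub>\<subseteq> (C ` K)"
      using underS_subset_total[OF \<kappa>(1)] K(1) unfolding chain_subset_def C_def by blast
    have "Field \<kappa> \<noteq> {}"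
      using \<kappa>(2) by auto
    then show "C ` K \<noteq> {}"
      using K(2) unfolding cofinal_def by blast
    show "|C ` K| <o \<kappa>"
      using ordLeq_ordLess_trans[OF card_of_image K_small] .
    fix B assume "B \<in> C ` K"
    then obtain k where k: "k \<in> K" "B = C k" by blast
    have "inj_on f B" "f ` B \<subseteq> underS \<kappa> k"
      using f k unfolding C_def inj_on_def by auto
    then have "|B| \<le>o |underS \<kappa> k|"
      using card_of_ordLeq[of B "underS \<kappa> k"] by blast
    then show "|B| <o \<kappa>"
      using ordLeq_ordLess_trans card_of_underS[OF \<kappa>(1)] k K(1) by blast
  qed
qed

section \<open>Coding finite sets\<close>

definition codes :: "('a, 'f, 'r) struct \<Rightarrow> ('f, 'r) fm \<Rightarrow> 'a \<Rightarrow> 'a set \<Rightarrow> bool" where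
  "codes M \<psi> y F \<longleftrightarrow> y \<in> dom M \<and> (\<forall>x\<in>dom M. eval M (asg x y) \<psi> \<longleftrightarrow> x \<in> F)"

text \<open>With \<psi>(x, y) read as "x belongs to the set coded by y", param_in_code \<psi> says that
  variable 2 belongs to the set coded by variable 0, and all_in_code \<psi> \<phi> that \<phi> holds of every
  member of the set coded by variable 0.\<close>
definition param_in_code :: "('f, 'r) fm \<Rightarrow> ('f, 'r) fm" where
  "param_in_code \<psi> = let_var 1 0 (let_var 0 2 \<psi>)"

definition all_in_code :: "('f, 'r) fm \<Rightarrow> ('f, 'r) fm \<Rightarrow> ('f, 'r) fm" where
  "all_in_code \<psi> \<phi> =
     let_var (fresh_var \<phi>) 0 (fAll 0 (fImp (let_var 1 (fresh_var \<phi>) \<psi>) \<phi>))"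

definition code_type :: "('f, 'r) fm \<Rightarrow> (('f, 'r) fm \<times> (nat \<Rightarrow> 'a)) set \<Rightarrow> 'a set
    \<Rightarrow> (('f, 'r) fm \<times> (nat \<Rightarrow> 'a)) set" where
  "code_type \<psi> p X =
     (\<lambda>(\<phi>, e). (all_in_code \<psi> \<phi>, e)) ` p \<union> (\<lambda>x. (param_in_code \<psi>, \<lambda>_. x)) ` X"

locale finite_set_coding =
  fixes L :: "('f, 'r) lang" and M :: "('a, 'f, 'r) struct" and \<psi> :: "('f, 'r) fm"
  assumes fwf_code: "fwf L \<psi>"
    and FV_code: "FV \<psi> \<subseteq> {0, 1}"
    and finite_set_coded: "finite F \<Longrightarrow> F \<subseteq> dom M \<Longrightarrow> \<exists>y. codes M \<psi> y F"
begin

lemma eval_code: "e 0 = x \<Longrightarrow> e 1 = y \<Longrightarrow> eval M e \<psi> \<longleftrightarrow> eval M (asg x y) \<psi>"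
  using FV_code by (intro eval_cong) (auto simp: asg_def)

lemma eval_param_in_code:
  assumes "e 0 \<in> dom M" "e 2 \<in> dom M"
  shows "eval M e (param_in_code \<psi>) \<longleftrightarrow> eval M (asg (e 2) (e 0)) \<psi>"
proof -
  have "eval M e (param_in_code \<psi>) \<longleftrightarrow> eval M (e(1 := e 0, 0 := e 2)) \<psi>"
    using assms by (simp add: param_in_code_def eval_let_var)
  also have "\<dots> \<longleftrightarrow> eval M (asg (e 2) (e 0)) \<psi>"
    by (rule eval_code) auto
  finally show ?thesis .
qed

lemma eval_all_in_code:
  assumes "e 0 \<in> dom M"
  shows "eval M e (all_in_code \<psi> \<phi>) \<longleftrightarrow>
    (\<forall>x\<in>dom M. eval M (asg x (e 0)) \<psi> \<longrightarrow> eval M (e(0 := x)) \<phi>)"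
proof -
  let ?w = "fresh_var \<phi>"
  have w: "?w \<noteq> 0" "?w \<noteq> 1" "?w \<notin> FV \<phi>"
    using fresh_var_gt[of 1 \<phi>] fresh_var_gt[of ?w \<phi>] by auto
  have "eval M (e(?w := e 0, 0 := x, 1 := e 0)) \<psi> \<longleftrightarrow> eval M (asg x (e 0)) \<psi>" for x
    by (rule eval_code) auto
  moreover have "eval M (e(?w := e 0, 0 := x)) \<phi> \<longleftrightarrow> eval M (e(0 := x)) \<phi>" for x
    using w by (intro eval_cong) auto
  ultimately show ?thesis
    using assms w by (simp add: all_in_code_def eval_let_var)
qed

lemma FV_param_in_code: "FV (param_in_code \<psi>) \<subseteq> {0, 2}"
  using FV_code by (auto simp: param_in_code_def)

lemma FV_all_in_code: "FV (all_in_code \<psi> \<phi>) \<subseteq> insert 0 (FV \<phi>)"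
  using FV_code by (auto simp: all_in_code_def)

lemma fwf_param_in_code: "fwf L (param_in_code \<psi>)"
  using fwf_code by (simp add: param_in_code_def)

lemma fwf_all_in_code: "fwf L (all_in_code \<psi> \<phi>) \<longleftrightarrow> fwf L \<phi>"
  using fwf_code by (simp add: all_in_code_def)

lemma realizes_code_type_iff:
  assumes "y \<in> dom M" "X \<subseteq> dom M"
  shows "realizes M y (code_type \<psi> p X) \<longleftrightarrow>
    (\<forall>x\<in>X. eval M (asg x y) \<psi>) \<and> (\<forall>x\<in>dom M. eval M (asg x y) \<psi> \<longrightarrow> realizes M x p)"
proof -
  have param: "eval M ((\<lambda>_. x)(0 := y)) (param_in_code \<psi>) \<longleftrightarrow> eval M (asg x y) \<psi>"
    if "x \<in> X" for x
    using eval_param_in_code assms that by auto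
  have all: "eval M (e(0 := y)) (all_in_code \<psi> \<phi>) \<longleftrightarrow>
      (\<forall>x\<in>dom M. eval M (asg x y) \<psi> \<longrightarrow> eval M (e(0 := x)) \<phi>)" for \<phi> e
    using eval_all_in_code[of "e(0 := y)" \<phi>] assms(1) by simp
  have "realizes M y (code_type \<psi> p X) \<longleftrightarrow>
      (\<forall>x\<in>X. eval M ((\<lambda>_. x)(0 := y)) (param_in_code \<psi>)) \<and>
      (\<forall>(\<phi>, e)\<in>p. eval M (e(0 := y)) (all_in_code \<psi> \<phi>))"
    unfolding realizes_def code_type_def using assms(1) by auto
  also have "\<dots> \<longleftrightarrow> (\<forall>x\<in>X. eval M (asg x y) \<psi>) \<and>
      (\<forall>(\<phi>, e)\<in>p. \<forall>x\<in>dom M. eval M (asg x y) \<psi> \<longrightarrow> eval M (e(0 := x)) \<phi>)"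
    using param all by simp
  also have "\<dots> \<longleftrightarrow> (\<forall>x\<in>X. eval M (asg x y) \<psi>) \<and>
      (\<forall>x\<in>dom M. eval M (asg x y) \<psi> \<longrightarrow> realizes M x p)"
    unfolding realizes_def by blast
  finally show ?thesis .
qed

lemma code_type_over: "p \<subseteq> over L A \<Longrightarrow> code_type \<psi> p X \<subseteq> over L (A \<union> X)"
  using FV_all_in_code FV_param_in_code
  unfolding code_type_def over_def by (fastforce simp: fwf_all_in_code fwf_param_in_code)

lemma finite_subset_code_type:
  assumes "finite q" "q \<subseteq> code_type \<psi> p X"
  obtains F where "finite F" "F \<subseteq> X" "q \<subseteq> code_type \<psi> p F"
proof
  let ?F = "{x \<in> X. (param_in_code \<psi>, \<lambda>_. x) \<in> q}"
  have "?F \<subseteq> (\<lambda>(_, e). e 0) ` q"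
    by force
  then show "finite ?F"
    using assms(1) finite_subset by blast
  show "?F \<subseteq> X" "q \<subseteq> code_type \<psi> p ?F"
    using assms(2) unfolding code_type_def by auto
qed

lemma saturated_code_of_realizers:
  assumes sat: "saturated L M \<kappa>" and \<kappa>: "Card_order \<kappa>" "infinite (Field \<kappa>)"
    and A: "A \<subseteq> dom M" "|A| <o \<kappa>" "p \<subseteq> over L A"
    and X: "X \<subseteq> dom M" "|X| <o \<kappa>" "\<And>x. x \<in> X \<Longrightarrow> realizes M x p"
  shows "\<exists>y\<in>dom M. (\<forall>x\<in>X. eval M (asg x y) \<psi>) \<and>
    (\<forall>x\<in>dom M. eval M (asg x y) \<psi> \<longrightarrow> realizes M x p)"
proof -
  have "is_type_over L M (A \<union> X) (code_type \<psi> p X)"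
    unfolding is_type_over_def
  proof (intro conjI allI impI code_type_over[OF A(3)], elim conjE)
    fix q assume "finite q" "q \<subseteq> code_type \<psi> p X"
    then obtain F where F: "finite F" "F \<subseteq> X" "q \<subseteq> code_type \<psi> p F"
      by (rule finite_subset_code_type)
    have "F \<subseteq> dom M"
      using F(2) X(1) by blast
    with F(1) obtain y where y: "codes M \<psi> y F"
      using finite_set_coded by blast
    have "y \<in> dom M" and y_F: "\<forall>x\<in>dom M. eval M (asg x y) \<psi> \<longleftrightarrow> x \<in> F"
      using y unfolding codes_def by auto
    moreover have "\<forall>x\<in>F. eval M (asg x y) \<psi>"
      using y_F \<open>F \<subseteq> dom M\<close> by blast
    moreover have "\<forall>x\<in>dom M. eval M (asg x y) \<psi> \<longrightarrow> realizes M x p"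
      using y_F F(2) X(3) by blast
    ultimately have "realizes M y (code_type \<psi> p F)"
      by (simp add: realizes_code_type_iff \<open>F \<subseteq> dom M\<close>)
    then show "\<exists>b. realizes M b q"
      using realizes_subset[OF _ F(3)] by blast
  qed
  moreover have "|A \<union> X| <o \<kappa>"
    using card_of_Un_ordLess_infinite_Field[OF \<kappa>(2,1) A(2) X(2)] .
  ultimately obtain y where "realizes M y (code_type \<psi> p X)"
    using saturatedD[OF sat] A(1) X(1) by blast
  moreover from this have "y \<in> dom M"
    unfolding realizes_def by blast
  ultimately show ?thesis
    using realizes_code_type_iff X(1) by blast
qed

lemma saturated_realizes_chain_Union:
  assumes sat: "saturated L M \<kappa>" and \<kappa>: "Card_order \<kappa>" "infinite (Field \<kappa>)"
    and chain: "chain\<^sub>\<subseteq> \<A>" "\<A> \<noteq> {}"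
    and small: "|\<A>| <o \<kappa>" "\<And>B. B \<in> \<A> \<Longrightarrow> B \<subseteq> dom M \<and> |B| <o \<kappa>"
    and tp: "is_type_over L M (\<Union>\<A>) p"
  shows "\<exists>x. realizes M x p"
proof -
  have "\<exists>b. realizes M b (p \<inter> over L B)" if "B \<in> \<A>" for B
    using saturatedD[OF sat _ _ is_type_over_restrict[OF tp]] small(2)[OF that] by blast
  then obtain b where b: "\<And>B. B \<in> \<A> \<Longrightarrow> realizes M (b B) (p \<inter> over L B)"
    by metis
  have "\<exists>y\<in>dom M. (\<forall>x\<in>b ` {C \<in> \<A>. B \<subseteq> C}. eval M (asg x y) \<psi>) \<and>
      (\<forall>x\<in>dom M. eval M (asg x y) \<psi> \<longrightarrow> realizes M x (p \<inter> over L B))" if B: "B \<in> \<A>" for B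
  proof (rule saturated_code_of_realizers[OF sat \<kappa>])
    show "B \<subseteq> dom M" "|B| <o \<kappa>"
      using small(2)[OF B] by auto
    show "p \<inter> over L B \<subseteq> over L B"
      by blast
    show "b ` {C \<in> \<A>. B \<subseteq> C} \<subseteq> dom M"
      using b unfolding realizes_def by blast
    have "{C \<in> \<A>. B \<subseteq> C} \<subseteq> \<A>"
      by blast
    from ordLeq_transitive[OF card_of_image card_of_mono1[OF this]]
    show "|b ` {C \<in> \<A>. B \<subseteq> C}| <o \<kappa>"
      using small(1) by (rule ordLeq_ordLess_trans)
  next
    fix x assume "x \<in> b ` {C \<in> \<A>. B \<subseteq> C}"
    then obtain C where "C \<in> \<A>" "B \<subseteq> C" "x = b C"
      by blast
    then show "realizes M x (p \<inter> over L B)"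
      using realizes_subset[OF b[of C]] over_mono[of B C L] by blast
  qed
  then obtain y where y: "\<And>B. B \<in> \<A> \<Longrightarrow> y B \<in> dom M \<and>
      (\<forall>x\<in>b ` {C \<in> \<A>. B \<subseteq> C}. eval M (asg x (y B)) \<psi>) \<and>
      (\<forall>x\<in>dom M. eval M (asg x (y B)) \<psi> \<longrightarrow> realizes M x (p \<inter> over L B))"
    by metis
  then have y_dom: "\<And>B. B \<in> \<A> \<Longrightarrow> y B \<in> dom M"
    and y_contains: "\<And>B C. B \<in> \<A> \<Longrightarrow> C \<in> \<A> \<Longrightarrow> B \<subseteq> C \<Longrightarrow> eval M (asg (b C) (y B)) \<psi>"
    and y_realizes: "\<And>B x. B \<in> \<A> \<Longrightarrow> x \<in> dom M \<Longrightarrow> eval M (asg x (y B)) \<psi> \<Longrightarrow>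
      realizes M x (p \<inter> over L B)"
    by blast+
  have "\<exists>x\<in>dom M. \<forall>z\<in>y ` \<A>. eval M (asg x z) \<psi>"
  proof (rule saturated_common_solution[OF sat fwf_code])
    show "y ` \<A> \<subseteq> dom M"
      using y_dom by blast
    show "|y ` \<A>| <o \<kappa>"
      using ordLeq_ordLess_trans[OF card_of_image small(1)] .
    fix F assume "finite F" "F \<subseteq> y ` \<A>"
    then obtain \<C> where \<C>: "\<C> \<subseteq> \<A>" "finite \<C>" "F = y ` \<C>"
      by (metis finite_subset_image)
    then obtain D where D: "D \<in> \<A>" "\<forall>C\<in>\<C>. C \<subseteq> D"
      using chain_subset_finite_bound[OF chain \<C>(2,1)] by blast
    have "b D \<in> dom M"
      using b[OF D(1)] unfolding realizes_def by blast
    moreover have "\<forall>z\<in>F. eval M (asg (b D) z) \<psi>"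
      using y_contains D \<C> by blast
    ultimately show "\<exists>x\<in>dom M. \<forall>z\<in>F. eval M (asg x z) \<psi>"
      by blast
  qed
  then obtain x where x: "x \<in> dom M" "\<And>B. B \<in> \<A> \<Longrightarrow> realizes M x (p \<inter> over L B)"
    using y_realizes by blast
  moreover have "p \<subseteq> over L (\<Union>\<A>)"
    using tp unfolding is_type_over_def by blast
  ultimately show ?thesis
    using realizes_chain_Union[OF chain] by blast
qed

lemma saturated_cardSuc_if_singular:
  assumes sing: "singular_cardinal \<kappa>" and sat: "saturated L M \<kappa>"
  shows "saturated L M (cardSuc \<kappa>)"
  unfolding saturated_def
proof (intro allI impI, elim conjE)
  fix A p assume A: "A \<subseteq> dom M" "|A| <o cardSuc \<kappa>" and tp: "is_type_over L M A p"
  have \<kappa>: "Card_order \<kappa>" "infinite (Field \<kappa>)"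
    using sing unfolding singular_cardinal_def by auto
  have "|A| \<le>o \<kappa>"
    using A(2) cardSuc_ordLeq_ordLess[OF \<kappa>(1) card_of_Card_order] by blast
  then obtain \<A> where \<A>: "\<Union>\<A> = A" "chain\<^sub>\<subseteq> \<A>" "\<A> \<noteq> {}" "|\<A>| <o \<kappa>"
    "\<And>B. B \<in> \<A> \<Longrightarrow> |B| <o \<kappa>"
    using singular_cardinal_chain_cover[OF sing] by metis
  have "\<And>B. B \<in> \<A> \<Longrightarrow> B \<subseteq> dom M \<and> |B| <o \<kappa>"
    using \<A>(1,5) A(1) by blast
  then show "\<exists>b. realizes M b p"
    using saturated_realizes_chain_Union[OF sat \<kappa> \<A>(2,3,4)] tp \<A>(1) by blast
qed

lemma has_IP_if_infinite:
  assumes "infinite (dom M)"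
  shows "has_IP L M \<psi> [0] [1]"
  unfolding has_IP_def
proof (intro conjI allI)
  show "fwf L \<psi>" "distinct ([0::nat] @ [1])" "FV \<psi> \<subseteq> set ([0] @ [1])"
    using fwf_code FV_code by auto
  obtain g :: "nat \<Rightarrow> _" where g: "inj g" "range g \<subseteq> dom M"
    using infinite_countable_subset[OF assms] by blast
  fix n :: nat
  show "\<exists>a. (\<forall>l<n. \<forall>j. a l j \<in> dom M) \<and>
      (\<forall>w\<subseteq>{..<n}. \<exists>b. (\<forall>j. b j \<in> dom M) \<and>
        (\<forall>l<n. eval M (\<lambda>v. if v \<in> set [0] then a l v else b v) \<psi> \<longleftrightarrow> l \<in> w))"
  proof (intro exI[where x = "\<lambda>l (_::nat). g l"] conjI allI impI)
    show "g l \<in> dom M" for l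
      using g(2) by blast
    fix w assume "w \<subseteq> {..<n}"
    then have "finite (g ` w)" "g ` w \<subseteq> dom M"
      using g(2) finite_subset[OF _ finite_lessThan] by auto
    then obtain y where y: "codes M \<psi> y (g ` w)"
      using finite_set_coded by blast
    then have "eval M (asg (g l) y) \<psi> \<longleftrightarrow> l \<in> w" for l
      using g unfolding codes_def by (metis inj_image_mem_iff range_subsetD)
    then show "\<exists>b. (\<forall>j. b j \<in> dom M) \<and>
        (\<forall>l<n. eval M (\<lambda>v. if v \<in> set [0] then g l else b v) \<psi> \<longleftrightarrow> l \<in> w)"
      using y unfolding codes_def by (intro exI[where x = "\<lambda>_. y"]) (simp add: asg_def)
  qed
qed

lemma ax_empty_code: "ax_empty M \<psi>"
  using finite_set_coded[of "{}"] unfolding ax_empty_def codes_def by auto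

lemma ax_add_code:
  assumes "\<And>y. y \<in> dom M \<Longrightarrow> finite {x \<in> dom M. eval M (asg x y) \<psi>}"
  shows "ax_add M \<psi>"
  unfolding ax_add_def
proof (intro ballI)
  fix a y assume "a \<in> dom M" "y \<in> dom M"
  then obtain y1 where "codes M \<psi> y1 (insert a {x \<in> dom M. eval M (asg x y) \<psi>})"
    using assms finite_set_coded by blast
  then show "\<exists>y1\<in>dom M. \<forall>x\<in>dom M. eval M (asg x y1) \<psi> \<longleftrightarrow> eval M (asg x y) \<psi> \<or> x = a"
    unfolding codes_def by blast
qed

end

lemma finite_set_coding_if_axioms:
  assumes "fwf L \<psi>" "FV \<psi> \<subseteq> {0, 1}" "ax_empty M \<psi>" "ax_add M \<psi>"
  shows "finite_set_coding L M \<psi>"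
proof (unfold_locales)
  show "\<exists>y. codes M \<psi> y F" if "finite F" "F \<subseteq> dom M" for F
    using that
  proof (induction F rule: finite_induct)
    case empty
    show ?case
      using \<open>ax_empty M \<psi>\<close> unfolding ax_empty_def codes_def by blast
  next
    case (insert a F)
    obtain y where y: "codes M \<psi> y F"
      using insert.IH insert.prems by blast
    have "a \<in> dom M" "y \<in> dom M"
      using insert.prems y unfolding codes_def by auto
    then obtain y1 where "y1 \<in> dom M"
      "\<forall>x\<in>dom M. eval M (asg x y1) \<psi> \<longleftrightarrow> eval M (asg x y) \<psi> \<or> x = a"
      using \<open>ax_add M \<psi>\<close> unfolding ax_add_def by blast
    then show ?case
      using y unfolding codes_def by auto
  qed
qed (use assms in auto)

section \<open>Theories of structures and the expansion (M, R)\<close>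

lemma is_model_Th: "is_struct L M \<Longrightarrow> is_model L M (Th L M)"
  unfolding is_model_def Th_def by auto

lemma complete_theory_Th:
  fixes M :: "('a, 'f, 'r) struct"
  assumes "is_struct L M"
  shows "complete_theory TYPE('a) L (Th L M)"
  unfolding complete_theory_def
proof (intro conjI allI impI)
  show "\<forall>\<sigma>\<in>Th L M. sentence L \<sigma>"
    unfolding Th_def by auto
  show "\<exists>N :: ('a, 'f, 'r) struct. is_model L N (Th L M)"
    using is_model_Th[OF assms] by blast
  fix \<sigma> assume \<sigma>: "sentence L \<sigma>"
  then have "sentence L (Neg \<sigma>)"
    unfolding sentence_def by simp
  moreover have "models M \<sigma> \<or> models M (Neg \<sigma>)"
    using sentence_eval_indep[OF \<sigma>, of M] unfolding models_def by auto
  ultimately show "\<sigma> \<in> Th L M \<or> Neg \<sigma> \<in> Th L M"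
    using \<sigma> unfolding Th_def by auto
qed

lemma models_if_model_Th:
  "is_model L N (Th L M) \<Longrightarrow> sentence L \<sigma> \<Longrightarrow> models M \<sigma> \<Longrightarrow> models N \<sigma>"
  unfolding is_model_def Th_def by blast

definition empty_code_ax :: "'r \<Rightarrow> ('f, 'r) fm" where
  "empty_code_ax r = Ex 1 (fAll 0 (Neg (Rel r [Var 0, Var 1])))"

definition add_code_ax :: "'r \<Rightarrow> ('f, 'r) fm" where
  "add_code_ax r = fAll 2 (fAll 3 (Ex 4 (fAll 5
     (fIff (Rel r [Var 5, Var 4]) (fOr (Rel r [Var 5, Var 3]) (Eq (Var 5) (Var 2)))))))"

lemma sentence_code_ax:
  "snd L r = 2 \<Longrightarrow> sentence L (empty_code_ax r)"
  "snd L r = 2 \<Longrightarrow> sentence L (add_code_ax r)"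
  unfolding sentence_def empty_code_ax_def add_code_ax_def by auto

lemma models_code_ax:
  "models N (empty_code_ax r) \<longleftrightarrow> ax_empty N (Rel r [Var 0, Var 1])"
  "models N (add_code_ax r) \<longleftrightarrow> ax_add N (Rel r [Var 0, Var 1])"
  unfolding models_def empty_code_ax_def add_code_ax_def ax_empty_def ax_add_def
  by (simp_all add: asg_def)

lemma code_axioms_if_model_Th:
  assumes N: "is_model L N (Th L M)" and r: "snd L r = 2"
  shows "ax_empty M (Rel r [Var 0, Var 1]) \<Longrightarrow> ax_empty N (Rel r [Var 0, Var 1])"
    and "ax_add M (Rel r [Var 0, Var 1]) \<Longrightarrow> ax_add N (Rel r [Var 0, Var 1])"
  using models_if_model_Th[OF N sentence_code_ax(1)[OF r]]
    models_if_model_Th[OF N sentence_code_ax(2)[OF r]]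
  by (simp_all only: models_code_ax)

lemma dom_expand [simp]: "dom (expand M u) = dom M"
  by (simp add: expand_def)

lemma is_struct_expand: "is_struct L M \<Longrightarrow> is_struct (expand_lang L) (expand M u)"
  unfolding is_struct_def expand_lang_def expand_def by auto

lemma eval_expand_rel: "eval (expand M u) (asg x y) (Rel None [Var 0, Var 1]) \<longleftrightarrow> x \<in> u y"
  by (simp add: expand_def asg_def)

lemma finite_set_coding_expand:
  assumes "\<forall>b\<in>dom M. u b \<subseteq> dom M" and "{F. finite F \<and> F \<subseteq> dom M} \<subseteq> u ` dom M"
  shows "finite_set_coding (expand_lang L) (expand M u) (Rel None [Var 0, Var 1])"
proof (unfold_locales)
  fix F assume "finite F" "F \<subseteq> dom (expand M u)"
  then obtain y where "y \<in> dom M" "u y = F"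
    using assms(2) by auto
  then show "\<exists>y. codes (expand M u) (Rel None [Var 0, Var 1]) y F"
    using assms(1) unfolding codes_def eval_expand_rel by auto
qed (auto simp: expand_lang_def)

lemma code_axioms_expand:
  assumes u: "\<forall>b\<in>dom M. finite (u b) \<and> u b \<subseteq> dom M"
    and all_finite: "{F. finite F \<and> F \<subseteq> dom M} \<subseteq> u ` dom M"
  shows "ax_empty (expand M u) (Rel None [Var 0, Var 1])"
    and "ax_add (expand M u) (Rel None [Var 0, Var 1])"
proof -
  have "\<forall>b\<in>dom M. u b \<subseteq> dom M"
    using u by blast
  then interpret finite_set_coding "expand_lang L" "expand M u" "Rel None [Var 0, Var 1]"
    using finite_set_coding_expand all_finite by blast
  show "ax_empty (expand M u) (Rel None [Var 0, Var 1])"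
    by (rule ax_empty_code)
  have "finite {x \<in> dom M. eval (expand M u) (asg x y) (Rel None [Var 0, Var 1])}"
    if "y \<in> dom M" for y
  proof (rule finite_subset)
    show "{x \<in> dom M. eval (expand M u) (asg x y) (Rel None [Var 0, Var 1])} \<subseteq> u y"
      unfolding eval_expand_rel by blast
  qed (use u that in blast)
  then show "ax_add (expand M u) (Rel None [Var 0, Var 1])"
    by (intro ax_add_code) simp
qed

lemma independent_Th_expand:
  assumes "is_struct L M" "infinite (dom M)"
    and "\<forall>b\<in>dom M. u b \<subseteq> dom M" "{F. finite F \<and> F \<subseteq> dom M} \<subseteq> u ` dom M"
  shows "independent (expand_lang L) (expand M u) (Th (expand_lang L) (expand M u))"
proof -
  interpret finite_set_coding "expand_lang L" "expand M u" "Rel None [Var 0, Var 1]"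
    using finite_set_coding_expand assms(3,4) by blast
  show ?thesis
    unfolding independent_def
    using is_model_Th[OF is_struct_expand[OF assms(1)]] has_IP_if_infinite assms(2) by auto
qed

lemma code_axioms_Th_expand:
  assumes "\<forall>b\<in>dom M. finite (u b) \<and> u b \<subseteq> dom M"
    and "{F. finite F \<and> F \<subseteq> dom M} \<subseteq> u ` dom M"
    and N: "is_model (expand_lang L) N (Th (expand_lang L) (expand M u))"
  shows "ax_empty N (Rel None [Var 0, Var 1])" and "ax_add N (Rel None [Var 0, Var 1])"
proof -
  have arity: "snd (expand_lang L) None = 2"
    by (simp add: expand_lang_def)
  show "ax_empty N (Rel None [Var 0, Var 1])"
    using code_axioms_if_model_Th(1)[OF N arity code_axioms_expand(1)[OF assms(1,2)]] .
  show "ax_add N (Rel None [Var 0, Var 1])"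
    using code_axioms_if_model_Th(2)[OF N arity code_axioms_expand(2)[OF assms(1,2)]] .
qed

theorem mainTheorem11:
  shows
  "(\<forall>(L :: ('f, 'r) lang) (T :: ('f, 'r) fm set) (\<phi> :: ('f, 'r) fm).
      complete_theory TYPE('a) L T \<and> fwf L \<phi> \<and> FV \<phi> \<subseteq> {0, 1} \<and>
      (\<forall>N :: ('a, 'f, 'r) struct. is_model L N T \<longrightarrow> ax_empty N \<phi>) \<and>
      (\<forall>N :: ('a, 'f, 'r) struct. is_model L N T \<longrightarrow> ax_add N \<phi>)
    \<longrightarrow> (\<forall>(\<kappa> :: 'k rel) (M :: ('a, 'f, 'r) struct).
          singular_cardinal \<kappa> \<and> is_model L M T \<longrightarrow>
            (saturated L M \<kappa> \<longrightarrow> saturated L M (cardSuc \<kappa>)) \<and>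
            \<not> (saturated L M \<kappa> \<and> \<not> saturated L M (cardSuc \<kappa>))))
   \<and>
   (\<forall>(L :: ('g, 's) lang) (M :: ('b, 'g, 's) struct) (u :: 'b \<Rightarrow> 'b set).
      is_struct L M \<and> infinite (dom M) \<and>
      (\<forall>b\<in>dom M. finite (u b) \<and> u b \<subseteq> dom M) \<and>
      {F. finite F \<and> F \<subseteq> dom M} \<subseteq> u ` dom M
    \<longrightarrow> (let L' = expand_lang L; MR = expand M u; T' = Th L' MR;
             R = (Rel None [Var 0, Var 1] :: ('g, 's option) fm)
         in complete_theory TYPE('b) L' T' \<and>
            (\<forall>N :: ('b, 'g, 's option) struct. is_model L' N T' \<longrightarrow> ax_empty N R) \<and>
            (\<forall>N :: ('b, 'g, 's option) struct. is_model L' N T' \<longrightarrow> ax_add N R) \<and>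
            (\<exists>N :: ('b, 'g, 's option) struct. independent L' N T')))"
  unfolding Let_def
proof (intro conjI allI impI; (elim conjE)?)
  fix L :: "('f, 'r) lang" and T \<phi> and \<kappa> :: "'k rel" and M :: "('a, 'f, 'r) struct"
  assume "fwf L \<phi>" "FV \<phi> \<subseteq> {0, 1}"
    "\<forall>N :: ('a, 'f, 'r) struct. is_model L N T \<longrightarrow> ax_empty N \<phi>"
    "\<forall>N :: ('a, 'f, 'r) struct. is_model L N T \<longrightarrow> ax_add N \<phi>"
    "singular_cardinal \<kappa>" "is_model L M T"
  then interpret finite_set_coding L M \<phi>
    using finite_set_coding_if_axioms by blast
  show "saturated L M (cardSuc \<kappa>)" if "saturated L M \<kappa>"
    using saturated_cardSuc_if_singular \<open>singular_cardinal \<kappa>\<close> that .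
  then show "\<not> (saturated L M \<kappa> \<and> \<not> saturated L M (cardSuc \<kappa>))"
    by blast
next
  fix L :: "('g, 's) lang" and M :: "('b, 'g, 's) struct" and u
  assume M: "is_struct L M" "infinite (dom M)"
    and u: "\<forall>b\<in>dom M. finite (u b) \<and> u b \<subseteq> dom M"
    and all_finite: "{F. finite F \<and> F \<subseteq> dom M} \<subseteq> u ` dom M"
  show "complete_theory TYPE('b) (expand_lang L) (Th (expand_lang L) (expand M u))"
    using complete_theory_Th[OF is_struct_expand[OF M(1)]] .
  show "ax_empty N (Rel None [Var 0, Var 1])" "ax_add N (Rel None [Var 0, Var 1])"
    if "is_model (expand_lang L) N (Th (expand_lang L) (expand M u))" for N
    using code_axioms_Th_expand[OF u all_finite that] by auto
  have "\<forall>b\<in>dom M. u b \<subseteq> dom M"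
    using u by blast
  then show "\<exists>N :: ('b, 'g, 's option) struct.
      independent (expand_lang L) N (Th (expand_lang L) (expand M u))"
    using independent_Th_expand[OF M _ all_finite] by blast
qed

end
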